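(* Let $\mathfrak{g}$ be a complex simple Lie algebra with Weyl group $W$, and let $\lambda_1,\lambda_2,\lambda_3,\lambda_4$ be dominant integral weights such that $\lambda_1+\lambda_2=\lambda=\lambda_3+\lambda_4$ and, for every positive root $\alpha$, $|(\lambda_1-\lambda_2)(\alpha^\vee)|\le|(\lambda_3-\lambda_4)(\alpha^\vee)|$. Suppose in addition that $P_{\lambda_1,\lambda_2}\subseteq C_f$ and $P_{\lambda_3,\lambda_4}\subseteq C_f$. Then $P_{\lambda_3,\lambda_4}\subseteq P_{\lambda_1,\lambda_2}$.
   Context: For dominant weights $\mu,\nu$, $P_{\mu,\nu}=\operatorname{Conv}\{\mu+w\nu : w\in W\}\subset P\otimes\mathbb{R}$, where $P$ is the weight lattice and $\operatorname{Conv}$ denotes convex hull. $C_f=\{x\in P\otimes\mathbb{R} : x(\alpha_i^\vee)\ge 0 \text{ for all simple coroots } \alpha_i^\vee\}$ is the (closed) fundamental Weyl chamber. $\alpha^\vee$ denotes the coroot of the root $\alpha$. *)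

theory Defs
  imports "HOL-Analysis.Analysis"
begin

text \<open>Root systems realised in a real Euclidean space 'a (playing the role of P \<otimes> R).
  The pairing x(alpha-coroot) of a vector with the coroot of \<alpha> is 2 (x\<bullet>\<alpha>)/(\<alpha>\<bullet>\<alpha>).\<close>

definition copair :: "'a::real_inner \<Rightarrow> 'a \<Rightarrow> real" where
  "copair x \<alpha> = 2 * (x \<bullet> \<alpha>) / (\<alpha> \<bullet> \<alpha>)"

definition refl :: "'a::real_inner \<Rightarrow> 'a \<Rightarrow> 'a" where
  "refl \<alpha> x = x - copair x \<alpha> *\<^sub>R \<alpha>"

definition root_system :: "'a::euclidean_space set \<Rightarrow> bool" where
  "root_system R \<longleftrightarrow> finite R \<and> 0 \<notin> R \<and> span R = UNIV
     \<and> (\<forall>\<alpha>\<in>R. refl \<alpha> ` R = R)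
     \<and> (\<forall>\<alpha>\<in>R. \<forall>\<beta>\<in>R. copair \<beta> \<alpha> \<in> \<int>)
     \<and> (\<forall>\<alpha>\<in>R. \<forall>c::real. c *\<^sub>R \<alpha> \<in> R \<longrightarrow> c = 1 \<or> c = -1)"

definition irreducible_rs :: "'a::euclidean_space set \<Rightarrow> bool" where
  "irreducible_rs R \<longleftrightarrow> \<not> (\<exists>A B. A \<noteq> {} \<and> B \<noteq> {} \<and> A \<union> B = R \<and> A \<inter> B = {}
        \<and> (\<forall>a\<in>A. \<forall>b\<in>B. a \<bullet> b = 0))"

definition is_base :: "'a::euclidean_space set \<Rightarrow> 'a set \<Rightarrow> bool" where
  "is_base R \<Delta> \<longleftrightarrow> \<Delta> \<subseteq> R \<and> independent \<Delta>
     \<and> (\<forall>\<beta>\<in>R. \<exists>k::'a \<Rightarrow> int. ((\<forall>\<alpha>\<in>\<Delta>. k \<alpha> \<ge> 0) \<or> (\<forall>\<alpha>\<in>\<Delta>. k \<alpha> \<le> 0))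
                 \<and> \<beta> = (\<Sum>\<alpha>\<in>\<Delta>. of_int (k \<alpha>) *\<^sub>R \<alpha>))"

definition positive_roots :: "'a::euclidean_space set \<Rightarrow> 'a set \<Rightarrow> 'a set" where
  "positive_roots R \<Delta> = {\<beta>\<in>R. \<exists>k::'a \<Rightarrow> int. (\<forall>\<alpha>\<in>\<Delta>. k \<alpha> \<ge> 0)
                 \<and> \<beta> = (\<Sum>\<alpha>\<in>\<Delta>. of_int (k \<alpha>) *\<^sub>R \<alpha>)}"

inductive_set weyl_group :: "'a::euclidean_space set \<Rightarrow> ('a \<Rightarrow> 'a) set" for R where
  id: "id \<in> weyl_group R"
| step: "\<alpha> \<in> R \<Longrightarrow> w \<in> weyl_group R \<Longrightarrow> refl \<alpha> \<circ> w \<in> weyl_group R"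

definition integral_weight :: "'a::euclidean_space set \<Rightarrow> 'a \<Rightarrow> bool" where
  "integral_weight R lam \<longleftrightarrow> (\<forall>\<alpha>\<in>R. copair lam \<alpha> \<in> \<int>)"

definition fundamental_chamber :: "'a::euclidean_space set \<Rightarrow> 'a set" where
  "fundamental_chamber \<Delta> = {x. \<forall>\<alpha>\<in>\<Delta>. copair x \<alpha> \<ge> 0}"

definition dominant_integral :: "'a::euclidean_space set \<Rightarrow> 'a set \<Rightarrow> 'a \<Rightarrow> bool" where
  "dominant_integral R \<Delta> lam \<longleftrightarrow> integral_weight R lam \<and> lam \<in> fundamental_chamber \<Delta>"

definition Ppoly :: "'a::euclidean_space set \<Rightarrow> 'a \<Rightarrow> 'a \<Rightarrow> 'a set" where
  "Ppoly R \<mu> \<nu> = convex hull {\<mu> + w \<nu> | w. w \<in> weyl_group R}"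

end

(*
  Put \<delta> = \<lambda>3 - \<lambda>1 = \<lambda>2 - \<lambda>4. For a simple root \<alpha>, the point \<lambda>3 + s_\<alpha> \<lambda>4 of
  P_{\<lambda>3,\<lambda>4} lies in C_f, so \<lambda>3(\<alpha>\<^sup>\<or>) \<ge> \<lambda>4(\<alpha>\<^sup>\<or>); with the hypothesis on \<alpha> and
  \<lambda>1 + \<lambda>2 = \<lambda>3 + \<lambda>4 this makes \<delta> dominant. It remains to show
  P_{\<mu>+\<delta>,\<nu>} \<subseteq> P_{\<mu>,\<nu>+\<delta>} for dominant \<delta> and \<nu>. By separation it suffices to
  compare the maxima of every linear functional on the two vertex sets; moving the
  functional into the fundamental chamber by an element of W reduces this to the classical
  inequality g \<bullet> w y \<le> g \<bullet> y for dominant g, y and w \<in> W, proved by induction on the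
  length of w as a word in simple reflections, using the exchange condition.
*)
theory Submission
  imports Defs
begin

section \<open>Reflections\<close>

lemma copair_add: "copair (x + y) a = copair x a + copair y a"
  by (simp add: copair_def inner_add_left add_divide_distrib)

lemma copair_diff: "copair (x - y) a = copair x a - copair y a"
  by (simp add: copair_def inner_diff_left diff_divide_distrib)

lemma copair_scaleR: "copair (c *\<^sub>R x) a = c * copair x a"
  by (simp add: copair_def)

lemma copair_self: "a \<noteq> 0 \<Longrightarrow> copair a a = 2"
  by (simp add: copair_def)

lemma copair_nonneg_iff: "a \<noteq> 0 \<Longrightarrow> 0 \<le> copair x a \<longleftrightarrow> 0 \<le> x \<bullet> a"
proof -
  assume "a \<noteq> 0"
  then have "\<not> a \<bullet> a \<le> 0" by (simp add: not_le)
  then show ?thesis by (simp add: copair_def zero_le_divide_iff)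
qed

text \<open>Since \<open>copair x 0 = 0\<close> (division by zero), \<open>refl 0 = id\<close>; hence the
  following facts about reflections need no hypothesis \<open>a \<noteq> 0\<close>.\<close>

lemma refl_zero: "refl 0 = id"
  by (simp add: refl_def copair_def fun_eq_iff)

lemma refl_self: "refl a a = - a"
  by (cases "a = 0") (simp_all add: refl_def copair_self scaleR_2)

lemma refl_uminus: "refl (- a) = refl a"
  by (simp add: refl_def copair_def fun_eq_iff)

lemma copair_refl_self: "copair (refl a x) a = - copair x a"
  by (cases "a = 0") (simp_all add: refl_def copair_diff copair_scaleR copair_self, simp add: copair_def)

lemma refl_refl [simp]: "refl a (refl a x) = x"
  by (cases "a = 0") (simp_all add: refl_zero, simp add: refl_def copair_diff copair_scaleR copair_self)

lemma orthogonal_transformation_refl: "orthogonal_transformation (refl a)"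
proof -
  have "linear (refl a)"
    by (rule linearI) (simp_all add: refl_def copair_add copair_scaleR algebra_simps)
  moreover have "refl a v \<bullet> refl a w = v \<bullet> w" for v w
    by (cases "a = 0")
       (simp_all add: refl_zero, simp add: refl_def copair_def inner_diff_left inner_diff_right
          inner_commute field_simps)
  ultimately show ?thesis
    by (simp add: orthogonal_transformation_def)
qed

lemma orthogonal_transformation_refl_conj:
  assumes "orthogonal_transformation U"
  shows "U (refl a x) = refl (U a) (U x)"
proof -
  have "copair (U x) (U a) = copair x a"
    using assms by (simp add: copair_def orthogonal_transformation_def)
  then show ?thesis
    using assms by (simp add: refl_def orthogonal_transformation_def linear_diff linear_scale)
qed

lemma refl_weyl_group: "\<alpha> \<in> R \<Longrightarrow> refl \<alpha> \<in> weyl_group R"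
  using weyl_group.step[OF _ weyl_group.id] by (metis comp_id)

lemma weyl_group_comp: "w \<in> weyl_group R \<Longrightarrow> v \<in> weyl_group R \<Longrightarrow> w \<circ> v \<in> weyl_group R"
  by (induct rule: weyl_group.induct) (simp_all add: comp_assoc weyl_group.step)

lemma weyl_group_right_inverse:
  "w \<in> weyl_group R \<Longrightarrow> \<exists>v\<in>weyl_group R. \<forall>x. w (v x) = x"
proof (induct rule: weyl_group.induct)
  case id
  show ?case
    by (rule bexI[OF _ weyl_group.id]) simp
next
  case (step \<alpha> w)
  then obtain v where v: "v \<in> weyl_group R" and "\<forall>x. w (v x) = x"
    by blast
  moreover have "v \<circ> refl \<alpha> \<in> weyl_group R"
    using weyl_group_comp[OF v refl_weyl_group[OF step(1)]] .
  ultimately show ?case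
    by (intro bexI[of _ "v \<circ> refl \<alpha>"]) simp_all
qed

lemma orthogonal_transformation_weyl_group:
  "w \<in> weyl_group R \<Longrightarrow> orthogonal_transformation w"
  by (induct rule: weyl_group.induct)
     (simp_all only: id_def orthogonal_transformation_id
        orthogonal_transformation_compose orthogonal_transformation_refl)

primrec refl_word :: "'a::real_inner list \<Rightarrow> 'a \<Rightarrow> 'a" where
  "refl_word [] = id"
| "refl_word (a # as) = refl a \<circ> refl_word as"

lemma refl_word_append: "refl_word (xs @ ys) = refl_word xs \<circ> refl_word ys"
  by (induct xs) auto

lemma orthogonal_transformation_refl_word: "orthogonal_transformation (refl_word xs)"
  by (induct xs)
     (simp_all only: refl_word.simps id_def orthogonal_transformation_id
        orthogonal_transformation_compose orthogonal_transformation_refl)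

lemma refl_word_rev_inverse [simp]: "refl_word xs (refl_word (rev xs) x) = x"
  by (induct xs arbitrary: x) (simp_all add: refl_word_append)

section \<open>Positive roots\<close>

locale based_root_system =
  fixes R D :: "'a::euclidean_space set"
  assumes root_system: "root_system R" and base: "is_base R D"
begin

lemma finite_roots: "finite R"
  and zero_notin_roots: "0 \<notin> R"
  and span_roots: "span R = UNIV"
  and refl_root: "\<alpha> \<in> R \<Longrightarrow> \<beta> \<in> R \<Longrightarrow> refl \<alpha> \<beta> \<in> R"
  and root_multiple: "\<alpha> \<in> R \<Longrightarrow> c *\<^sub>R \<alpha> \<in> R \<Longrightarrow> c = 1 \<or> c = -1"
  using root_system unfolding root_system_def by blast+

lemma simple_roots_subset: "D \<subseteq> R"
  and independent_simple_roots: "independent D"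
  using base unfolding is_base_def by blast+

lemma finite_simple_roots: "finite D"
  using finite_roots simple_roots_subset finite_subset by blast

lemma zero_notin_simple_roots: "0 \<notin> D"
  using simple_roots_subset zero_notin_roots by blast

lemma uminus_root: "\<alpha> \<in> R \<Longrightarrow> - \<alpha> \<in> R"
  using refl_root[of \<alpha> \<alpha>] by (simp add: refl_self)

lemma root_simple_combination:
  assumes "\<beta> \<in> R"
  obtains k :: "'a \<Rightarrow> int"
  where "(\<forall>\<alpha>\<in>D. 0 \<le> k \<alpha>) \<or> (\<forall>\<alpha>\<in>D. k \<alpha> \<le> 0)" "\<beta> = (\<Sum>\<alpha>\<in>D. of_int (k \<alpha>) *\<^sub>R \<alpha>)"
  using base assms unfolding is_base_def by blast

lemma span_simple_roots: "span D = UNIV"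
proof -
  have "\<beta> \<in> span D" if \<beta>: "\<beta> \<in> R" for \<beta>
  proof -
    obtain k :: "'a \<Rightarrow> int" where "\<beta> = (\<Sum>\<alpha>\<in>D. of_int (k \<alpha>) *\<^sub>R \<alpha>)"
      using root_simple_combination[OF \<beta>] by blast
    then show ?thesis
      by (simp add: span_sum span_scale span_base)
  qed
  then have "R \<subseteq> span D" by blast
  then show ?thesis
    using span_roots span_minimal[of R "span D"] by auto
qed

lemma representation_simple_combination:
  assumes "\<gamma> \<in> D"
  shows "representation D (\<Sum>\<alpha>\<in>D. k \<alpha> *\<^sub>R \<alpha>) \<gamma> = k \<gamma>"
proof -
  have "representation D (\<Sum>\<alpha>\<in>D. k \<alpha> *\<^sub>R \<alpha>) \<gamma>
      = (\<Sum>\<alpha>\<in>D. k \<alpha> * (if \<gamma> = \<alpha> then 1 else 0))"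
    by (simp add: representation_sum representation_scale representation_basis
        independent_simple_roots span_simple_roots)
  also have "\<dots> = k \<gamma>"
    using assms finite_simple_roots by (simp add: if_distrib sum.delta cong: if_cong)
  finally show ?thesis .
qed

lemma sum_simple_coordinates: "(\<Sum>\<gamma>\<in>D. representation D x \<gamma> *\<^sub>R \<gamma>) = x"
  by (simp add: sum_representation_eq independent_simple_roots finite_simple_roots span_simple_roots)

lemma representation_uminus: "representation D (- x) \<gamma> = - representation D x \<gamma>"
  by (simp add: representation_neg independent_simple_roots span_simple_roots)

lemma representation_refl_simple:
  assumes "\<alpha> \<in> D"
  shows "representation D (refl \<alpha> x) \<gamma>
      = representation D x \<gamma> - (if \<gamma> = \<alpha> then copair x \<alpha> else 0)"
  using assms
  by (simp add: refl_def representation_diff representation_scale representation_basis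
      independent_simple_roots span_simple_roots)

lemma root_coordinates_same_sign:
  assumes "\<beta> \<in> R"
  shows "(\<forall>\<gamma>\<in>D. 0 \<le> representation D \<beta> \<gamma>) \<or> (\<forall>\<gamma>\<in>D. representation D \<beta> \<gamma> \<le> 0)"
proof -
  obtain k :: "'a \<Rightarrow> int" where "(\<forall>\<alpha>\<in>D. 0 \<le> k \<alpha>) \<or> (\<forall>\<alpha>\<in>D. k \<alpha> \<le> 0)"
    and "\<beta> = (\<Sum>\<alpha>\<in>D. of_int (k \<alpha>) *\<^sub>R \<alpha>)"
    using root_simple_combination[OF assms] by blast
  then show ?thesis
    using representation_simple_combination[of _ "\<lambda>\<alpha>. of_int (k \<alpha>)"] by auto
qed

lemma positive_roots_iff:
  "\<beta> \<in> positive_roots R D \<longleftrightarrow> \<beta> \<in> R \<and> (\<forall>\<gamma>\<in>D. 0 \<le> representation D \<beta> \<gamma>)"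
proof
  assume "\<beta> \<in> positive_roots R D"
  then obtain k :: "'a \<Rightarrow> int"
    where "\<beta> \<in> R" "\<forall>\<alpha>\<in>D. 0 \<le> k \<alpha>" "\<beta> = (\<Sum>\<alpha>\<in>D. of_int (k \<alpha>) *\<^sub>R \<alpha>)"
    unfolding positive_roots_def by blast
  then show "\<beta> \<in> R \<and> (\<forall>\<gamma>\<in>D. 0 \<le> representation D \<beta> \<gamma>)"
    using representation_simple_combination[of _ "\<lambda>\<alpha>. of_int (k \<alpha>)"] by simp
next
  assume \<beta>: "\<beta> \<in> R \<and> (\<forall>\<gamma>\<in>D. 0 \<le> representation D \<beta> \<gamma>)"
  then obtain k :: "'a \<Rightarrow> int" where k: "\<beta> = (\<Sum>\<alpha>\<in>D. of_int (k \<alpha>) *\<^sub>R \<alpha>)"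
    using root_simple_combination by blast
  then have "\<forall>\<alpha>\<in>D. 0 \<le> k \<alpha>"
    using \<beta> representation_simple_combination[of _ "\<lambda>\<alpha>. of_int (k \<alpha>)"] by simp
  with \<beta> k show "\<beta> \<in> positive_roots R D"
    unfolding positive_roots_def by blast
qed

lemma positive_root_is_root: "\<beta> \<in> positive_roots R D \<Longrightarrow> \<beta> \<in> R"
  by (simp add: positive_roots_iff)

lemma root_or_uminus_positive:
  "\<beta> \<in> R \<Longrightarrow> \<beta> \<in> positive_roots R D \<or> - \<beta> \<in> positive_roots R D"
  using root_coordinates_same_sign[of \<beta>] uminus_root[of \<beta>]
  by (auto simp: positive_roots_iff representation_uminus)

lemma simple_root_positive: "\<alpha> \<in> D \<Longrightarrow> \<alpha> \<in> positive_roots R D"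
  using simple_roots_subset
  by (auto simp: positive_roots_iff representation_basis independent_simple_roots)

lemma refl_simple_positive_root:
  assumes \<alpha>: "\<alpha> \<in> D" and \<beta>: "\<beta> \<in> positive_roots R D" and "\<beta> \<noteq> \<alpha>"
  shows "refl \<alpha> \<beta> \<in> positive_roots R D"
proof (cases "\<exists>\<gamma>\<in>D. \<gamma> \<noteq> \<alpha> \<and> 0 < representation D \<beta> \<gamma>")
  case True
  then obtain \<gamma> where "\<gamma> \<in> D" "\<gamma> \<noteq> \<alpha>" "0 < representation D \<beta> \<gamma>"
    by blast
  moreover have "refl \<alpha> \<beta> \<in> R"
    using \<alpha> \<beta> simple_roots_subset refl_root positive_root_is_root by blast
  ultimately show ?thesis
    using root_coordinates_same_sign[of "refl \<alpha> \<beta>"]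
    by (fastforce simp: positive_roots_iff representation_refl_simple[OF \<alpha>])
next
  case False
  then have "representation D \<beta> \<gamma> = 0" if "\<gamma> \<in> D" "\<gamma> \<noteq> \<alpha>" for \<gamma>
    using that \<beta> by (force simp: positive_roots_iff)
  then have "\<beta> = (\<Sum>\<gamma>\<in>D. (if \<gamma> = \<alpha> then representation D \<beta> \<alpha> *\<^sub>R \<alpha> else 0))"
    by (subst sum_simple_coordinates[symmetric]) (rule sum.cong, auto)
  also have "\<dots> = representation D \<beta> \<alpha> *\<^sub>R \<alpha>"
    using \<alpha> finite_simple_roots by simp
  finally have \<beta>_eq: "\<beta> = representation D \<beta> \<alpha> *\<^sub>R \<alpha>" .
  have "representation D \<beta> \<alpha> *\<^sub>R \<alpha> \<in> R"
    by (subst \<beta>_eq[symmetric]) (rule positive_root_is_root[OF \<beta>])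
  then have "representation D \<beta> \<alpha> = 1 \<or> representation D \<beta> \<alpha> = -1"
    using root_multiple \<alpha> simple_roots_subset by blast
  moreover have "0 \<le> representation D \<beta> \<alpha>"
    using \<alpha> \<beta> by (simp add: positive_roots_iff)
  ultimately have "\<beta> = \<alpha>"
    using \<beta>_eq by auto
  with \<open>\<beta> \<noteq> \<alpha>\<close> show ?thesis by blast
qed

lemma mem_fundamental_chamber_iff: "x \<in> fundamental_chamber D \<longleftrightarrow> (\<forall>\<alpha>\<in>D. 0 \<le> x \<bullet> \<alpha>)"
proof -
  have "0 \<le> copair x \<alpha> \<longleftrightarrow> 0 \<le> x \<bullet> \<alpha>" if "\<alpha> \<in> D" for \<alpha>
    using that zero_notin_simple_roots copair_nonneg_iff by metis
  then show ?thesis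
    unfolding fundamental_chamber_def by blast
qed

lemma chamber_inner_positive_root_nonneg:
  assumes "g \<in> fundamental_chamber D" and "\<beta> \<in> positive_roots R D"
  shows "0 \<le> g \<bullet> \<beta>"
proof -
  have "g \<bullet> \<beta> = g \<bullet> (\<Sum>\<gamma>\<in>D. representation D \<beta> \<gamma> *\<^sub>R \<gamma>)"
    by (simp add: sum_simple_coordinates)
  also have "\<dots> = (\<Sum>\<gamma>\<in>D. representation D \<beta> \<gamma> * (g \<bullet> \<gamma>))"
    by (simp add: inner_sum_right)
  also have "\<dots> \<ge> 0"
    using assms by (auto simp: positive_roots_iff mem_fundamental_chamber_iff intro!: sum_nonneg)
  finally show ?thesis .
qed

section \<open>The Weyl group\<close>

definition height :: "'a \<Rightarrow> real" where
  "height x = (\<Sum>\<gamma>\<in>D. representation D x \<gamma>)"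

lemma height_refl_simple:
  assumes "\<alpha> \<in> D"
  shows "height (refl \<alpha> x) = height x - copair x \<alpha>"
proof -
  have "height (refl \<alpha> x) = (\<Sum>\<gamma>\<in>D. representation D x \<gamma> - (if \<gamma> = \<alpha> then copair x \<alpha> else 0))"
    unfolding height_def representation_refl_simple[OF assms] ..
  also have "\<dots> = height x - copair x \<alpha>"
    using assms finite_simple_roots by (simp add: height_def sum_subtractf)
  finally show ?thesis .
qed

lemma positive_root_inner_simple_pos:
  assumes "\<beta> \<in> positive_roots R D"
  obtains \<alpha> where "\<alpha> \<in> D" "0 < \<beta> \<bullet> \<alpha>"
proof (rule ccontr)
  assume "\<not> thesis"
  with that have "\<forall>\<alpha>\<in>D. \<beta> \<bullet> \<alpha> \<le> 0"
    by (meson not_le)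
  have "\<beta> \<bullet> \<beta> = (\<Sum>\<gamma>\<in>D. representation D \<beta> \<gamma> * (\<beta> \<bullet> \<gamma>))"
    by (subst (2) sum_simple_coordinates[symmetric]) (simp add: inner_sum_right)
  also have "\<dots> \<le> 0"
    using \<open>\<forall>\<alpha>\<in>D. \<beta> \<bullet> \<alpha> \<le> 0\<close> assms
    by (auto simp: positive_roots_iff intro!: sum_nonpos mult_nonneg_nonpos)
  finally have "\<beta> = 0"
    by (metis inner_gt_zero_iff not_le)
  then show False
    using assms zero_notin_roots positive_root_is_root by blast
qed

lemma positive_root_simple_conjugate:
  "\<beta> \<in> positive_roots R D \<Longrightarrow> \<exists>us \<alpha>. set us \<subseteq> D \<and> \<alpha> \<in> D \<and> \<beta> = refl_word us \<alpha>"
proof (induct "card {\<gamma> \<in> positive_roots R D. height \<gamma> < height \<beta>}" arbitrary: \<beta>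
    rule: less_induct)
  case less
  show ?case
  proof (cases "\<beta> \<in> D")
    case True
    then show ?thesis
      by (intro exI[of _ "[]"] exI[of _ \<beta>]) simp
  next
    case False
    obtain \<alpha> where \<alpha>: "\<alpha> \<in> D" "0 < \<beta> \<bullet> \<alpha>"
      using positive_root_inner_simple_pos[OF less.prems] by blast
    define \<beta>' where "\<beta>' = refl \<alpha> \<beta>"
    have \<beta>'_pos: "\<beta>' \<in> positive_roots R D"
      unfolding \<beta>'_def using refl_simple_positive_root \<alpha>(1) less.prems False by blast
    have "\<alpha> \<noteq> 0"
      using \<alpha>(1) zero_notin_simple_roots by blast
    then have "0 < copair \<beta> \<alpha>"
      using \<alpha>(2) by (simp add: copair_def zero_less_divide_iff)
    then have "height \<beta>' < height \<beta>"
      unfolding \<beta>'_def by (simp add: height_refl_simple[OF \<alpha>(1)])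
    then have "{\<gamma> \<in> positive_roots R D. height \<gamma> < height \<beta>'}
        \<subset> {\<gamma> \<in> positive_roots R D. height \<gamma> < height \<beta>}"
      using \<beta>'_pos by auto
    then have "card {\<gamma> \<in> positive_roots R D. height \<gamma> < height \<beta>'}
        < card {\<gamma> \<in> positive_roots R D. height \<gamma> < height \<beta>}"
      by (rule psubset_card_mono[rotated])
         (rule finite_subset[OF _ finite_roots], auto dest: positive_root_is_root)
    then obtain us \<alpha>' where "set us \<subseteq> D" "\<alpha>' \<in> D" "\<beta>' = refl_word us \<alpha>'"
      using less.hyps \<beta>'_pos by blast
    moreover have "\<beta> = refl \<alpha> \<beta>'"
      by (simp add: \<beta>'_def)
    ultimately show ?thesis
      using \<alpha>(1) by (intro exI[of _ "\<alpha> # us"] exI[of _ \<alpha>']) auto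
  qed
qed

lemma refl_simple_word:
  assumes "\<beta> \<in> R"
  obtains xs where "set xs \<subseteq> D" "refl \<beta> = refl_word xs"
proof -
  obtain \<beta>\<^sub>0 where "\<beta>\<^sub>0 \<in> positive_roots R D" and refl_\<beta>: "refl \<beta> = refl \<beta>\<^sub>0"
    using root_or_uminus_positive[OF assms] refl_uminus[of \<beta>] by metis
  then obtain us \<alpha> where us: "set us \<subseteq> D" and \<alpha>: "\<alpha> \<in> D" and \<beta>\<^sub>0: "\<beta>\<^sub>0 = refl_word us \<alpha>"
    using positive_root_simple_conjugate by blast
  have "refl_word (us @ \<alpha> # rev us) = refl_word us \<circ> refl \<alpha> \<circ> refl_word (rev us)"
    by (simp add: refl_word_append o_assoc)
  also have "\<dots> = refl \<beta>\<^sub>0"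
    using orthogonal_transformation_refl_conj[OF orthogonal_transformation_refl_word, of us \<alpha>]
    by (simp add: \<beta>\<^sub>0 fun_eq_iff)
  finally have "refl \<beta> = refl_word (us @ \<alpha> # rev us)"
    by (simp add: refl_\<beta>)
  then show ?thesis
    using that[of "us @ \<alpha> # rev us"] us \<alpha> by simp
qed

lemma weyl_group_simple_word:
  "w \<in> weyl_group R \<Longrightarrow> \<exists>xs. set xs \<subseteq> D \<and> w = refl_word xs"
proof (induct rule: weyl_group.induct)
  case id
  then show ?case
    by (intro exI[of _ "[]"]) simp
next
  case (step \<alpha> w)
  then obtain xs ys where "set xs \<subseteq> D" "w = refl_word xs" "set ys \<subseteq> D" "refl \<alpha> = refl_word ys"
    using refl_simple_word by metis
  then show ?case
    by (intro exI[of _ "ys @ xs"]) (simp add: refl_word_append)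
qed

lemma refl_word_exchange:
  assumes "set us \<subseteq> D" and "\<alpha> \<in> D" and "refl_word us \<alpha> \<notin> positive_roots R D"
  shows "\<exists>vs. set vs \<subseteq> D \<and> length vs < length us \<and> refl_word us \<circ> refl \<alpha> = refl_word vs"
  using assms
proof (induct us)
  case Nil
  then show ?case
    using simple_root_positive by simp
next
  case (Cons a us)
  then have a: "a \<in> D" and us: "set us \<subseteq> D"
    by auto
  show ?case
  proof (cases "refl_word us \<alpha> \<in> positive_roots R D")
    case False
    then obtain vs where "set vs \<subseteq> D" "length vs < length us" "refl_word us \<circ> refl \<alpha> = refl_word vs"
      using Cons.hyps us \<open>\<alpha> \<in> D\<close> by blast
    moreover from this(3) have "refl_word (a # us) \<circ> refl \<alpha> = refl_word (a # vs)"
      by (metis comp_assoc refl_word.simps(2))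
    ultimately show ?thesis
      using a by (intro exI[of _ "a # vs"] conjI) (assumption | simp)+
  next
    case True
    have "refl_word us \<alpha> = a"
      using refl_simple_positive_root[OF a True] Cons.prems(3) by auto
    then have "refl_word us \<circ> refl \<alpha> = refl a \<circ> refl_word us"
      using orthogonal_transformation_refl_conj[OF orthogonal_transformation_refl_word, of us \<alpha>]
      by (simp add: fun_eq_iff)
    then have "refl_word (a # us) \<circ> refl \<alpha> = refl_word us"
      by (simp add: fun_eq_iff)
    then show ?thesis
      using us by (intro exI[of _ us] conjI) (assumption | simp)+
  qed
qed

text \<open>Write the word as \<open>w' s\<^sub>a\<close>. Either the exchange condition shortens it, or \<open>w' a\<close>
  is a positive root and \<open>w' s\<^sub>a y = w' y - y(a\<^sup>\<or>) w' a\<close> only decreases the pairing with \<open>g\<close>.\<close>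

lemma inner_refl_word_le:
  assumes "set us \<subseteq> D" and "g \<in> fundamental_chamber D" and "y \<in> fundamental_chamber D"
  shows "g \<bullet> refl_word us y \<le> g \<bullet> y"
  using assms(1)
proof (induct "length us" arbitrary: us rule: less_induct)
  case less
  show ?case
  proof (cases us rule: rev_cases)
    case Nil
    then show ?thesis by simp
  next
    case (snoc vs a)
    then have a: "a \<in> D" and vs: "set vs \<subseteq> D"
      using less.prems by auto
    have us_eq: "refl_word us = refl_word vs \<circ> refl a"
      using snoc by (simp add: refl_word_append)
    show ?thesis
    proof (cases "refl_word vs a \<in> positive_roots R D")
      case False
      then obtain ws where "set ws \<subseteq> D" "length ws < length vs" "refl_word vs \<circ> refl a = refl_word ws"
        using refl_word_exchange[OF vs a] by blast
      then show ?thesis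
        using less.hyps[of ws] snoc us_eq by simp
    next
      case True
      have "a \<noteq> 0"
        using a zero_notin_simple_roots by blast
      then have "0 \<le> copair y a"
        using assms(3) a by (simp add: mem_fundamental_chamber_iff copair_nonneg_iff)
      moreover have "0 \<le> g \<bullet> refl_word vs a"
        using chamber_inner_positive_root_nonneg[OF assms(2) True] .
      moreover have "refl_word us y = refl_word vs y - copair y a *\<^sub>R refl_word vs a"
        using orthogonal_transformation_linear[OF orthogonal_transformation_refl_word, of vs]
        by (simp add: us_eq refl_def linear_diff linear_scale)
      ultimately have "g \<bullet> refl_word us y \<le> g \<bullet> refl_word vs y"
        by (simp add: inner_diff_right)
      also have "\<dots> \<le> g \<bullet> y"
        using less.hyps[of vs] snoc vs by simp
      finally show ?thesis .
    qed
  qed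
qed

lemma inner_weyl_group_le:
  "w \<in> weyl_group R \<Longrightarrow> g \<in> fundamental_chamber D \<Longrightarrow> y \<in> fundamental_chamber D
    \<Longrightarrow> g \<bullet> w y \<le> g \<bullet> y"
  using weyl_group_simple_word inner_refl_word_le by blast

lemma weyl_group_root: "w \<in> weyl_group R \<Longrightarrow> \<beta> \<in> R \<Longrightarrow> w \<beta> \<in> R"
  by (induct rule: weyl_group.induct) (auto intro: refl_root)

lemma finite_weyl_group: "finite (weyl_group R)"
proof -
  have "inj_on (\<lambda>w. restrict w R) (weyl_group R)"
  proof (rule inj_onI)
    fix w v
    assume w: "w \<in> weyl_group R" and v: "v \<in> weyl_group R"
      and "restrict w R = restrict v R"
    then have "w \<beta> = v \<beta>" if "\<beta> \<in> R" for \<beta>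
      using that by (metis restrict_apply')
    then have "w x = v x" for x
      using linear_eq_on_span[of w v R x] span_roots
        orthogonal_transformation_linear[OF orthogonal_transformation_weyl_group[OF w]]
        orthogonal_transformation_linear[OF orthogonal_transformation_weyl_group[OF v]]
      by blast
    then show "w = v" ..
  qed
  moreover have "(\<lambda>w. restrict w R) ` weyl_group R \<subseteq> PiE R (\<lambda>_. R)"
    using weyl_group_root by auto
  moreover have "finite (PiE R (\<lambda>_. R))"
    using finite_roots by (simp add: finite_PiE)
  ultimately show ?thesis
    by (metis finite_imageD finite_subset)
qed

lemma exists_strictly_dominant: "\<exists>\<rho>. \<forall>\<alpha>\<in>D. 0 < \<rho> \<bullet> \<alpha>"
proof -
  obtain f :: "'a \<Rightarrow> real" where f: "linear f" "\<forall>\<alpha>\<in>D. f \<alpha> = 1"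
    using linear_independent_extend[OF independent_simple_roots, of "\<lambda>_. 1"] by blast
  have "\<alpha> \<bullet> adjoint f 1 = f \<alpha>" for \<alpha>
    using adjoint_works[OF f(1), of \<alpha> 1] by simp
  then have "\<forall>\<alpha>\<in>D. 0 < adjoint f 1 \<bullet> \<alpha>"
    using f(2) by (simp add: inner_commute)
  then show ?thesis ..
qed

text \<open>A point of the orbit of \<open>x\<close> maximising the pairing with a strictly dominant \<open>\<rho>\<close> is
  dominant, since a simple reflection would otherwise increase that pairing.\<close>

lemma weyl_group_conj_chamber: "\<exists>u\<in>weyl_group R. u x \<in> fundamental_chamber D"
proof -
  obtain \<rho> where \<rho>: "\<forall>\<alpha>\<in>D. 0 < \<rho> \<bullet> \<alpha>"
    using exists_strictly_dominant by blast
  define m where "m = Max ((\<lambda>v. \<rho> \<bullet> v x) ` weyl_group R)"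
  have max: "\<rho> \<bullet> v x \<le> m" if "v \<in> weyl_group R" for v
    unfolding m_def by (rule Max_ge) (use that finite_weyl_group in auto)
  have "m \<in> (\<lambda>v. \<rho> \<bullet> v x) ` weyl_group R"
    unfolding m_def by (rule Max_in) (use finite_weyl_group weyl_group.id in auto)
  then obtain u where u: "u \<in> weyl_group R" "\<rho> \<bullet> u x = m"
    by blast
  have "0 \<le> u x \<bullet> \<alpha>" if \<alpha>: "\<alpha> \<in> D" for \<alpha>
  proof (rule ccontr)
    assume "\<not> 0 \<le> u x \<bullet> \<alpha>"
    moreover have "\<alpha> \<noteq> 0"
      using \<alpha> zero_notin_simple_roots by blast
    ultimately have "copair (u x) \<alpha> < 0"
      using copair_nonneg_iff[of \<alpha> "u x"] by linarith
    then have "\<rho> \<bullet> u x < \<rho> \<bullet> (refl \<alpha> \<circ> u) x"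
      using \<rho> \<alpha> by (simp add: refl_def inner_diff_right mult_neg_pos)
    moreover have "refl \<alpha> \<circ> u \<in> weyl_group R"
      using weyl_group.step u(1) \<alpha> simple_roots_subset by blast
    ultimately show False
      using max u(2) by fastforce
  qed
  then show ?thesis
    using u(1) by (auto simp: mem_fundamental_chamber_iff)
qed

end

section \<open>The polytopes\<close>

lemma mem_convex_hull_if_inner_le:
  fixes S :: "'a::euclidean_space set"
  assumes "compact S" and "\<And>a. \<exists>x\<in>S. a \<bullet> q \<le> a \<bullet> x"
  shows "q \<in> convex hull S"
proof (rule ccontr)
  assume "q \<notin> convex hull S"
  then obtain a b where "a \<bullet> q < b" "\<forall>x\<in>convex hull S. b < a \<bullet> x"
    using separating_hyperplane_closed_point[OF convex_convex_hull
        compact_imp_closed[OF compact_convex_hull[OF assms(1)]]] by blast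
  moreover obtain x where "x \<in> S" "(- a) \<bullet> q \<le> (- a) \<bullet> x"
    using assms(2) by blast
  moreover from this(1) have "x \<in> convex hull S"
    by (rule hull_inc)
  ultimately show False
    by auto
qed

context based_root_system
begin

lemma Ppoly_shift_subset:
  assumes \<delta>: "\<delta> \<in> fundamental_chamber D" and \<nu>: "\<nu> \<in> fundamental_chamber D"
  shows "Ppoly R (\<mu> + \<delta>) \<nu> \<subseteq> Ppoly R \<mu> (\<nu> + \<delta>)"
proof -
  define S where "S = {\<mu> + w (\<nu> + \<delta>) | w. w \<in> weyl_group R}"
  have "S = (\<lambda>w. \<mu> + w (\<nu> + \<delta>)) ` weyl_group R"
    unfolding S_def by blast
  then have "compact S"
    using finite_weyl_group by (simp add: finite_imp_compact)
  have "\<mu> + \<delta> + w \<nu> \<in> convex hull S" if w: "w \<in> weyl_group R" for w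
  proof (rule mem_convex_hull_if_inner_le[OF \<open>compact S\<close>])
    fix a
    obtain u where u: "u \<in> weyl_group R" "u a \<in> fundamental_chamber D"
      using weyl_group_conj_chamber by blast
    obtain v where v: "v \<in> weyl_group R" "\<forall>x. u (v x) = x"
      using weyl_group_right_inverse[OF u(1)] by blast
    have u_inner: "u y \<bullet> u z = y \<bullet> z" for y z
      using orthogonal_transformation_weyl_group[OF u(1)] by (simp add: orthogonal_transformation_def)
    have "a \<bullet> (\<mu> + \<delta> + w \<nu>) = a \<bullet> \<mu> + u a \<bullet> u \<delta> + u a \<bullet> (u \<circ> w) \<nu>"
      by (simp add: u_inner inner_add_right)
    also have "\<dots> \<le> a \<bullet> \<mu> + u a \<bullet> \<delta> + u a \<bullet> \<nu>"
      using inner_weyl_group_le[OF u \<delta>] inner_weyl_group_le[OF weyl_group_comp[OF u(1) w] u(2) \<nu>]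
      by linarith
    also have "\<dots> = a \<bullet> (\<mu> + v (\<nu> + \<delta>))"
      using u_inner[of a "v (\<nu> + \<delta>)"] v(2) by (simp add: inner_add_right)
    finally show "\<exists>x\<in>S. a \<bullet> (\<mu> + \<delta> + w \<nu>) \<le> a \<bullet> x"
      using v(1) unfolding S_def by blast
  qed
  then show ?thesis
    unfolding Ppoly_def S_def[symmetric] by (intro hull_minimal) (auto simp: convex_convex_hull)
qed

lemma copair_le_if_Ppoly_subset_chamber:
  assumes "Ppoly R \<mu> \<nu> \<subseteq> fundamental_chamber D" and \<alpha>: "\<alpha> \<in> D"
  shows "copair \<nu> \<alpha> \<le> copair \<mu> \<alpha>"
proof -
  have "refl \<alpha> \<in> weyl_group R"
    using refl_weyl_group \<alpha> simple_roots_subset by blast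
  then have "\<mu> + refl \<alpha> \<nu> \<in> Ppoly R \<mu> \<nu>"
    unfolding Ppoly_def by (blast intro: hull_inc)
  then have "0 \<le> copair (\<mu> + refl \<alpha> \<nu>) \<alpha>"
    using assms unfolding fundamental_chamber_def by blast
  then show ?thesis
    by (simp add: copair_add copair_refl_self)
qed

lemma diff_mem_fundamental_chamber:
  assumes "Ppoly R l3 l4 \<subseteq> fundamental_chamber D" and "l1 + l2 = l3 + l4"
    and "\<forall>\<alpha>\<in>positive_roots R D. \<bar>copair (l1 - l2) \<alpha>\<bar> \<le> \<bar>copair (l3 - l4) \<alpha>\<bar>"
  shows "l3 - l1 \<in> fundamental_chamber D"
  unfolding fundamental_chamber_def mem_Collect_eq
proof
  fix \<alpha> assume \<alpha>: "\<alpha> \<in> D"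
  have "copair l4 \<alpha> \<le> copair l3 \<alpha>"
    using copair_le_if_Ppoly_subset_chamber[OF assms(1) \<alpha>] .
  moreover have "\<bar>copair l1 \<alpha> - copair l2 \<alpha>\<bar> \<le> \<bar>copair l3 \<alpha> - copair l4 \<alpha>\<bar>"
    using assms(3) simple_root_positive[OF \<alpha>] by (simp add: copair_diff)
  moreover have "copair l1 \<alpha> + copair l2 \<alpha> = copair l3 \<alpha> + copair l4 \<alpha>"
    using assms(2) by (metis copair_add)
  ultimately show "0 \<le> copair (l3 - l1) \<alpha>"
    by (simp add: copair_diff)
qed

end

theorem mainTheorem2:
  fixes R \<Delta> :: "'a::euclidean_space set" and l1 l2 l3 l4 lam :: 'a
  assumes "root_system R" and "irreducible_rs R" and "is_base R \<Delta>"
    and "dominant_integral R \<Delta> l1" and "dominant_integral R \<Delta> l2"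
    and "dominant_integral R \<Delta> l3" and "dominant_integral R \<Delta> l4"
    and "l1 + l2 = lam" and "l3 + l4 = lam"
    and "\<forall>\<alpha>\<in>positive_roots R \<Delta>. \<bar>copair (l1 - l2) \<alpha>\<bar> \<le> \<bar>copair (l3 - l4) \<alpha>\<bar>"
    and "Ppoly R l1 l2 \<subseteq> fundamental_chamber \<Delta>"
    and "Ppoly R l3 l4 \<subseteq> fundamental_chamber \<Delta>"
  shows "Ppoly R l3 l4 \<subseteq> Ppoly R l1 l2"
proof -
  interpret based_root_system R \<Delta>
    using assms(1,3) by unfold_locales
  have "l3 - l1 \<in> fundamental_chamber \<Delta>"
    using diff_mem_fundamental_chamber assms(8-10,12) by simp
  moreover have "l4 \<in> fundamental_chamber \<Delta>"
    using assms(7) by (simp add: dominant_integral_def)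
  ultimately have "Ppoly R (l1 + (l3 - l1)) l4 \<subseteq> Ppoly R l1 (l4 + (l3 - l1))"
    by (rule Ppoly_shift_subset)
  moreover have "l4 + (l3 - l1) = l2"
    using assms(8,9) by (metis add.commute add_diff_cancel_left' diff_add_cancel diff_diff_eq2)
  ultimately show ?thesis
    by simp
qed

end
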